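(* Let $n\ge1$ and $f:(\mathbb{R}_{>0})^n\to\mathbb{R}$, $f(z_2,\ldots,z_{n+1})=\frac{(1+z_2+\cdots+z_{n+1})^{n+1}}{z_2\cdots z_{n+1}}$. For $t\in\mathbb{R}$, the preimage $f^{-1}(t)$ is empty if $t<(n+1)^{n+1}$, a single point if $t=(n+1)^{n+1}$, and diffeomorphic to $S^{n-1}$ if $t>(n+1)^{n+1}$. *)

theory Defs
  imports "HOL-Analysis.Analysis"
begin

fun iter_dir :: "'a::real_normed_vector list \<Rightarrow> ('a \<Rightarrow> 'b::real_normed_vector) \<Rightarrow> 'a \<Rightarrow> 'b" where
  "iter_dir [] f = f"
| "iter_dir (v # vs) f = (\<lambda>x. frechet_derivative (iter_dir vs f) (at x) v)"

definition smooth_on_open :: "'a::euclidean_space set \<Rightarrow> ('a \<Rightarrow> 'b::real_normed_vector) \<Rightarrow> bool" where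
  "smooth_on_open U f \<longleftrightarrow> open U \<and>
     (\<forall>vs. set vs \<subseteq> Basis \<longrightarrow> iter_dir vs f differentiable_on U)"

text \<open>Smooth map on an arbitrary subset S (Milnor): locally the restriction of a smooth map
  on an open set.\<close>
definition smooth_map_on :: "'a::euclidean_space set \<Rightarrow> ('a \<Rightarrow> 'b::real_normed_vector) \<Rightarrow> bool" where
  "smooth_map_on S h \<longleftrightarrow>
     (\<forall>x\<in>S. \<exists>U F. x \<in> U \<and> smooth_on_open U F \<and> (\<forall>y\<in>S \<inter> U. F y = h y))"

definition diffeomorphic :: "'a::euclidean_space set \<Rightarrow> 'b::euclidean_space set \<Rightarrow> bool" where
  "diffeomorphic S T \<longleftrightarrow> (\<exists>h g. (\<forall>x\<in>S. h x \<in> T) \<and> (\<forall>y\<in>T. g y \<in> S) \<and>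
      (\<forall>x\<in>S. g (h x) = x) \<and> (\<forall>y\<in>T. h (g y) = y) \<and>
      smooth_map_on S h \<and> smooth_map_on T g)"

end

theory Submission
  imports Defs
begin

text \<open>
  In logarithmic coordinates \<open>z\<^sub>i = exp x\<^sub>i\<close> the function becomes \<open>exp \<circ> log_f\<close>, where
  \<open>log_f x = (n+1) ln (1 + \<Sigma> exp x\<^sub>i) - \<Sigma> x\<^sub>i\<close>. Along every ray \<open>r \<mapsto> r u\<close>, \<open>u \<noteq> 0\<close>,
  \<open>log_f\<close> is strictly increasing for \<open>r \<ge> 0\<close> and unbounded, starting from its minimum
  \<open>log_f 0 = (n+1) ln (n+1)\<close>. Hence the level sets below the minimum are empty, the minimal one
  is the point \<open>z = 1\<close>, and every higher level set meets each ray exactly once, at a radius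
  \<open>R(u)\<close>; \<open>u \<mapsto> exp (R(u) u)\<close> and \<open>z \<mapsto> ln z / |ln z|\<close> are mutually inverse maps between
  the sphere and the level set. The radius is smooth by the inverse function theorem applied to
  \<open>(u, r) \<mapsto> (u, log_f (r u))\<close>, whose derivative in \<open>r\<close> is positive; smoothness of all orders
  follows because the derivative of \<open>R\<close> is an elementary expression in \<open>R\<close> itself.
\<close>

section \<open>Smoothness via classes of elementary functions\<close>

text \<open>
  If the derivatives of the atoms lie in
  this class, so do those of all its members, which yields smoothness of every order without
  computing iterated derivatives.
\<close>
inductive_set elementary_funs :: "'a::real_normed_vector set \<Rightarrow> ('a \<Rightarrow> real) set \<Rightarrow> ('a \<Rightarrow> real) set"
  for U :: "'a set" and A :: "('a \<Rightarrow> real) set" where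
  atom: "a \<in> A \<Longrightarrow> a \<in> elementary_funs U A"
| const: "(\<lambda>x. c) \<in> elementary_funs U A"
| linear: "bounded_linear l \<Longrightarrow> l \<in> elementary_funs U A"
| add: "f \<in> elementary_funs U A \<Longrightarrow> g \<in> elementary_funs U A \<Longrightarrow> (\<lambda>x. f x + g x) \<in> elementary_funs U A"
| mult: "f \<in> elementary_funs U A \<Longrightarrow> g \<in> elementary_funs U A \<Longrightarrow> (\<lambda>x. f x * g x) \<in> elementary_funs U A"
| exp: "f \<in> elementary_funs U A \<Longrightarrow> (\<lambda>x. exp (f x)) \<in> elementary_funs U A"
| ln: "f \<in> elementary_funs U A \<Longrightarrow> (\<forall>x\<in>U. 0 < f x) \<Longrightarrow> (\<lambda>x. ln (f x)) \<in> elementary_funs U A"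
| inverse: "f \<in> elementary_funs U A \<Longrightarrow> (\<forall>x\<in>U. f x \<noteq> 0) \<Longrightarrow> (\<lambda>x. inverse (f x)) \<in> elementary_funs U A"
| sqrt: "f \<in> elementary_funs U A \<Longrightarrow> (\<forall>x\<in>U. 0 < f x) \<Longrightarrow> (\<lambda>x. sqrt (f x)) \<in> elementary_funs U A"

lemma elementary_funs_uminus:
  "f \<in> elementary_funs U A \<Longrightarrow> (\<lambda>x. - f x) \<in> elementary_funs U A"
  using elementary_funs.mult[OF elementary_funs.const[of "-1"]] by simp

lemma elementary_funs_diff:
  "f \<in> elementary_funs U A \<Longrightarrow> g \<in> elementary_funs U A \<Longrightarrow> (\<lambda>x. f x - g x) \<in> elementary_funs U A"
  using elementary_funs.add[OF _ elementary_funs_uminus] by simp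

lemma elementary_funs_divide:
  "f \<in> elementary_funs U A \<Longrightarrow> g \<in> elementary_funs U A \<Longrightarrow> \<forall>x\<in>U. g x \<noteq> 0 \<Longrightarrow>
    (\<lambda>x. f x / g x) \<in> elementary_funs U A"
  unfolding divide_inverse by (intro elementary_funs.mult elementary_funs.inverse)

lemma elementary_funs_sum:
  "finite I \<Longrightarrow> (\<And>i. i \<in> I \<Longrightarrow> F i \<in> elementary_funs U A) \<Longrightarrow> (\<lambda>x. \<Sum>i\<in>I. F i x) \<in> elementary_funs U A"
  by (induction I rule: finite_induct) (auto intro: elementary_funs.const[of 0] elementary_funs.add)

lemma elementary_funs_vec_nth: "(\<lambda>x::real^'n. x $ i) \<in> elementary_funs U A"
  by (rule elementary_funs.linear) (rule bounded_linear_vec_nth)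

definition derivatives_in :: "'a::real_normed_vector set \<Rightarrow> ('a \<Rightarrow> 'b::real_normed_vector) set \<Rightarrow> ('a \<Rightarrow> 'b) set \<Rightarrow> bool" where
  "derivatives_in U A K \<longleftrightarrow>
     (\<forall>f\<in>A. \<exists>Df. (\<forall>x\<in>U. (f has_derivative (\<lambda>v. Df v x)) (at x)) \<and> (\<forall>v. Df v \<in> K))"

lemma derivatives_inI:
  assumes "\<And>x. x \<in> U \<Longrightarrow> (f has_derivative (\<lambda>v. Df v x)) (at x)" and "\<And>v. Df v \<in> K"
  shows "\<exists>Df. (\<forall>x\<in>U. (f has_derivative (\<lambda>v. Df v x)) (at x)) \<and> (\<forall>v. Df v \<in> K)"
  using assms by blast

lemma derivatives_in_elementary_funs:
  assumes "derivatives_in U A (elementary_funs U A)"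
  shows "derivatives_in U (elementary_funs U A) (elementary_funs U A)"
  unfolding derivatives_in_def
proof
  fix h assume "h \<in> elementary_funs U A"
  then show "\<exists>Dh. (\<forall>x\<in>U. (h has_derivative (\<lambda>v. Dh v x)) (at x)) \<and> (\<forall>v. Dh v \<in> elementary_funs U A)"
  proof (induction rule: elementary_funs.induct)
    case (atom a)
    then show ?case using assms by (auto simp: derivatives_in_def)
  next
    case (const c)
    show ?case by (rule derivatives_inI[where Df = "\<lambda>v x. 0"]) (auto intro: elementary_funs.const)
  next
    case (linear l)
    show ?case
      by (rule derivatives_inI[where Df = "\<lambda>v x. l v"])
        (auto intro: elementary_funs.const bounded_linear_imp_has_derivative[OF linear.hyps])
  next
    case (add f g)
    then obtain Df Dg where
      "\<forall>x\<in>U. (f has_derivative (\<lambda>v. Df v x)) (at x)" "\<And>v. Df v \<in> elementary_funs U A"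
      "\<forall>x\<in>U. (g has_derivative (\<lambda>v. Dg v x)) (at x)" "\<And>v. Dg v \<in> elementary_funs U A" by blast
    then show ?case
      by (intro derivatives_inI[where Df = "\<lambda>v x. Df v x + Dg v x"])
        (auto intro!: derivative_eq_intros elementary_funs.add)
  next
    case (mult f g)
    then obtain Df Dg where
      "\<forall>x\<in>U. (f has_derivative (\<lambda>v. Df v x)) (at x)" "\<And>v. Df v \<in> elementary_funs U A"
      "\<forall>x\<in>U. (g has_derivative (\<lambda>v. Dg v x)) (at x)" "\<And>v. Dg v \<in> elementary_funs U A" by blast
    then show ?case
      by (intro derivatives_inI[where Df = "\<lambda>v x. f x * Dg v x + Df v x * g x"])
        (auto intro!: derivative_eq_intros elementary_funs.add elementary_funs.mult mult.hyps)
  next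
    case (exp f)
    then obtain Df where
      "\<forall>x\<in>U. (f has_derivative (\<lambda>v. Df v x)) (at x)" "\<And>v. Df v \<in> elementary_funs U A" by blast
    then show ?case
      by (intro derivatives_inI[where Df = "\<lambda>v x. exp (f x) * Df v x"])
        (auto intro!: derivative_eq_intros elementary_funs.mult elementary_funs.exp exp.hyps)
  next
    case (ln f)
    then obtain Df where
      "\<forall>x\<in>U. (f has_derivative (\<lambda>v. Df v x)) (at x)" "\<And>v. Df v \<in> elementary_funs U A" by blast
    with ln.hyps show ?case
      by (intro derivatives_inI[where Df = "\<lambda>v x. Df v x / f x"])
        (auto intro!: derivative_eq_intros elementary_funs_divide simp: field_simps)
  next
    case (inverse f)
    then obtain Df where
      "\<forall>x\<in>U. (f has_derivative (\<lambda>v. Df v x)) (at x)" "\<And>v. Df v \<in> elementary_funs U A" by blast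
    with inverse.hyps show ?case
      by (intro derivatives_inI[where Df = "\<lambda>v x. - (inverse (f x) * Df v x * inverse (f x))"])
        (auto intro!: derivative_eq_intros elementary_funs_uminus elementary_funs.mult
          elementary_funs.inverse)
  next
    case (sqrt f)
    then obtain Df where
      "\<forall>x\<in>U. (f has_derivative (\<lambda>v. Df v x)) (at x)" "\<And>v. Df v \<in> elementary_funs U A" by blast
    with sqrt.hyps show ?case
      by (intro derivatives_inI[where Df = "\<lambda>v x. Df v x / (2 * sqrt (f x))"])
        (auto intro!: derivative_eq_intros elementary_funs_divide elementary_funs.mult
          elementary_funs.const elementary_funs.sqrt simp: field_simps)
  qed
qed

lemma iter_dir_derivatives_in:
  assumes U: "open U" and K: "derivatives_in U K K" and f: "f \<in> K"
  shows "\<exists>g\<in>K. \<forall>x\<in>U. iter_dir vs f x = g x"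
proof (induction vs)
  case Nil
  then show ?case using f by auto
next
  case (Cons v vs)
  then obtain g where g: "g \<in> K" "\<forall>x\<in>U. iter_dir vs f x = g x" by blast
  then obtain Dg where Dg: "\<forall>x\<in>U. (g has_derivative (\<lambda>v. Dg v x)) (at x)" "\<And>v. Dg v \<in> K"
    using K g(1) unfolding derivatives_in_def by blast
  have "iter_dir (v # vs) f x = Dg v x" if x: "x \<in> U" for x
  proof -
    have "(iter_dir vs f has_derivative (\<lambda>v. Dg v x)) (at x)"
      using has_derivative_transform_within_open[OF Dg(1)[rule_format, OF x] U x] g(2) by simp
    then have "frechet_derivative (iter_dir vs f) (at x) = (\<lambda>v. Dg v x)"
      by (rule frechet_derivative_at[symmetric])
    then show ?thesis by simp
  qed
  with Dg(2) show ?case by blast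
qed

lemma smooth_on_open_if_derivatives_in:
  fixes K :: "('a::euclidean_space \<Rightarrow> 'b::real_normed_vector) set"
  assumes U: "open U" and K: "derivatives_in U K K" and f: "f \<in> K"
  shows "smooth_on_open U f"
  unfolding smooth_on_open_def
proof (intro conjI U allI impI)
  fix vs :: "'a list"
  obtain g where g: "g \<in> K" "\<forall>x\<in>U. iter_dir vs f x = g x"
    using iter_dir_derivatives_in[OF U K f] by blast
  then obtain Dg where Dg: "\<forall>x\<in>U. (g has_derivative (\<lambda>v. Dg v x)) (at x)"
    using K g(1) unfolding derivatives_in_def by blast
  have "(iter_dir vs f has_derivative (\<lambda>v. Dg v x)) (at x)" if x: "x \<in> U" for x
    using has_derivative_transform_within_open[OF Dg[rule_format, OF x] U x] g(2) by simp
  then show "iter_dir vs f differentiable_on U"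
    unfolding differentiable_on_def differentiable_def by (blast intro: has_derivative_at_withinI)
qed

lemma derivatives_in_vec_components:
  assumes "derivatives_in U E E"
  shows "derivatives_in U {F :: 'a::real_normed_vector \<Rightarrow> real^'n. \<forall>i. (\<lambda>x. F x $ i) \<in> E}
           {F. \<forall>i. (\<lambda>x. F x $ i) \<in> E}"
  unfolding derivatives_in_def
proof
  fix F :: "'a \<Rightarrow> real^'n" assume "F \<in> {F. \<forall>i. (\<lambda>x. F x $ i) \<in> E}"
  then have "\<forall>i. \<exists>Df. (\<forall>x\<in>U. ((\<lambda>x. F x $ i) has_derivative (\<lambda>v. Df v x)) (at x)) \<and> (\<forall>v. Df v \<in> E)"
    using assms unfolding derivatives_in_def by blast
  then obtain D where D: "\<forall>i. (\<forall>x\<in>U. ((\<lambda>x. F x $ i) has_derivative (\<lambda>v. D i v x)) (at x))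
      \<and> (\<forall>v. D i v \<in> E)"
    by (subst (asm) choice_iff) blast
  have "(F has_derivative (\<lambda>v. \<chi> i. D i v x)) (at x)" if "x \<in> U" for x
    using D that unfolding has_derivative_componentwise_within[of F]
    by (auto simp: inner_axis Basis_vec_def)
  with D show "\<exists>DF. (\<forall>x\<in>U. (F has_derivative (\<lambda>v. DF v x)) (at x)) \<and>
      (\<forall>v. DF v \<in> {F. \<forall>i. (\<lambda>x. F x $ i) \<in> E})"
    by (intro exI[of _ "\<lambda>v x. \<chi> i. D i v x"]) auto
qed

lemma smooth_on_open_elementary_components:
  fixes F :: "'a::euclidean_space \<Rightarrow> real^'n"
  assumes U: "open U" and A: "derivatives_in U A (elementary_funs U A)"
    and F: "\<And>i. (\<lambda>x. F x $ i) \<in> elementary_funs U A"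
  shows "smooth_on_open U F"
  using smooth_on_open_if_derivatives_in[OF U
      derivatives_in_vec_components[OF derivatives_in_elementary_funs[OF A]]] F
  by blast

lemma smooth_map_on_subset: "smooth_on_open U h \<Longrightarrow> S \<subseteq> U \<Longrightarrow> smooth_map_on S h"
  unfolding smooth_map_on_def by blast

section \<open>The function in logarithmic coordinates\<close>

lemma diff_mult_exp_diff_nonneg:
  fixes a b r :: real
  assumes "0 \<le> r"
  shows "0 \<le> (a - b) * (exp (r * a) - exp (r * b))"
proof (cases "a \<le> b")
  case True
  then have "exp (r * a) \<le> exp (r * b)" using assms by (simp add: mult_left_mono)
  with True show ?thesis by (intro mult_nonpos_nonpos) auto
next
  case False
  then have "exp (r * b) \<le> exp (r * a)" using assms by (simp add: mult_left_mono)
  with False show ?thesis by (intro mult_nonneg_nonneg) auto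
qed

lemma diff_mult_exp_diff_pos:
  fixes a b r :: real
  assumes "0 < r" and "a \<noteq> b"
  shows "0 < (a - b) * (exp (r * a) - exp (r * b))"
proof (cases "a < b")
  case True
  then have "exp (r * a) < exp (r * b)" using assms by simp
  with True show ?thesis by (intro mult_neg_neg) auto
next
  case False
  then have "b < a" using assms by simp
  then have "exp (r * b) < exp (r * a)" using assms by simp
  with \<open>b < a\<close> show ?thesis by (intro mult_pos_pos) auto
qed

lemma sum_sum_diff_mult_diff:
  fixes u e :: "'i \<Rightarrow> real"
  assumes "finite I"
  shows "(\<Sum>i\<in>I. \<Sum>j\<in>I. (u i - u j) * (e i - e j))
     = 2 * (real (card I) * (\<Sum>i\<in>I. u i * e i) - (\<Sum>i\<in>I. u i) * (\<Sum>i\<in>I. e i))"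
proof -
  have split: "(u i - u j) * (e i - e j) = (u i * e i + u j * e j) - u i * e j - u j * e i" for i j
    by (simp add: algebra_simps)
  have "(\<Sum>i\<in>I. \<Sum>j\<in>I. u i * e i + u j * e j) = 2 * (real (card I) * (\<Sum>i\<in>I. u i * e i))"
    by (simp add: sum.distrib sum_distrib_left algebra_simps)
  moreover have "(\<Sum>i\<in>I. \<Sum>j\<in>I. u i * e j) = (\<Sum>i\<in>I. u i) * (\<Sum>i\<in>I. e i)"
    by (simp add: sum_product)
  moreover have "(\<Sum>i\<in>I. \<Sum>j\<in>I. u j * e i) = (\<Sum>i\<in>I. u i) * (\<Sum>i\<in>I. e i)"
    by (subst sum.swap) (simp add: sum_product)
  ultimately show ?thesis
    unfolding split by (simp add: sum_subtractf)
qed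

definition log_f :: "real^'n \<Rightarrow> real" where
  "log_f x = (real CARD('n) + 1) * ln (1 + (\<Sum>i\<in>UNIV. exp (x $ i))) - (\<Sum>i\<in>UNIV. x $ i)"

definition log_f_deriv :: "real^'n \<Rightarrow> real^'n \<Rightarrow> real" where
  "log_f_deriv x h =
     (real CARD('n) + 1) * (\<Sum>i\<in>UNIV. exp (x $ i) * h $ i) / (1 + (\<Sum>i\<in>UNIV. exp (x $ i)))
     - (\<Sum>i\<in>UNIV. h $ i)"

lemma one_plus_sum_exp_pos: "0 < 1 + (\<Sum>i\<in>I. exp (g i :: real))"
  by (simp add: add_pos_nonneg sum_nonneg)

lemma has_derivative_log_f: "(log_f has_derivative log_f_deriv x) (at x)"
proof -
  note vec_nth_derivative = bounded_linear_vec_nth[THEN bounded_linear.has_derivative]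
  show ?thesis
    unfolding log_f_def[abs_def] log_f_deriv_def[abs_def]
    using one_plus_sum_exp_pos[where I = UNIV and g = "\<lambda>i. x $ i"]
    by (auto intro!: derivative_eq_intros has_derivative_sum vec_nth_derivative
        simp: fun_eq_iff mult.commute distrib_right simp flip: sum_divide_distrib,
        simp add: divide_inverse algebra_simps)
qed

lemma linear_log_f_deriv: "linear (log_f_deriv x)"
  using has_derivative_log_f by (rule has_derivative_linear)

lemma log_f_zero: "log_f (0::real^'n) = (real CARD('n) + 1) * ln (1 + real CARD('n))"
  unfolding log_f_def by simp

lemma exp_log_f_zero: "exp (log_f (0::real^'n)) = real (CARD('n) + 1) ^ (CARD('n) + 1)"
proof -
  have "exp (log_f (0::real^'n)) = exp (ln ((1 + real CARD('n)) ^ (CARD('n) + 1)))"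
    unfolding log_f_zero by (subst ln_realpow) auto
  then show ?thesis by (simp add: add.commute)
qed

text \<open>
  Multiplied by \<open>1 + \<Sigma> e\<^sub>i\<close> with \<open>e\<^sub>i = exp (r u\<^sub>i)\<close>, the derivative becomes
  \<open>\<Sigma> u\<^sub>i (e\<^sub>i - 1) + \<onehalf> \<Sigma>\<^sub>i\<^sub>j (u\<^sub>i - u\<^sub>j) (e\<^sub>i - e\<^sub>j)\<close>, and every summand has the
  sign of a product of differences under the increasing map \<open>exp (r \<cdot>)\<close>.
\<close>
lemma log_f_deriv_ray_pos:
  fixes u :: "real^'n"
  assumes u: "u \<noteq> 0" and r: "0 < r"
  shows "0 < log_f_deriv (r *\<^sub>R u) u"
proof -
  define e where "e i = exp (r * u $ i)" for i
  define D where "D = 1 + (\<Sum>i\<in>UNIV. e i)"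
  have D: "0 < D" unfolding D_def e_def by (rule one_plus_sum_exp_pos)
  obtain k where k: "u $ k \<noteq> 0" using u by (auto simp: vec_eq_iff)
  have "0 < (\<Sum>i\<in>UNIV. (u $ i - 0) * (exp (r * u $ i) - exp (r * 0)))"
    using diff_mult_exp_diff_pos[OF r k] diff_mult_exp_diff_nonneg[of r _ 0] r
    by (intro sum_pos2[of UNIV k]) auto
  then have first: "0 < (\<Sum>i\<in>UNIV. u $ i * e i) - (\<Sum>i\<in>UNIV. u $ i)"
    by (simp add: e_def algebra_simps sum_subtractf)
  have "0 \<le> (\<Sum>i\<in>UNIV. \<Sum>j\<in>UNIV. (u $ i - u $ j) * (exp (r * u $ i) - exp (r * u $ j)))"
    using diff_mult_exp_diff_nonneg r by (intro sum_nonneg) auto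
  then have second: "0 \<le> real CARD('n) * (\<Sum>i\<in>UNIV. u $ i * e i) - (\<Sum>i\<in>UNIV. u $ i) * (\<Sum>i\<in>UNIV. e i)"
    using sum_sum_diff_mult_diff[of UNIV "\<lambda>i. u $ i" e] by (simp add: e_def)
  have "log_f_deriv (r *\<^sub>R u) u
      = ((real CARD('n) + 1) * (\<Sum>i\<in>UNIV. u $ i * e i) - D * (\<Sum>i\<in>UNIV. u $ i)) / D"
    using D unfolding log_f_deriv_def D_def e_def by (simp add: field_simps mult.commute)
  also have "\<dots> > 0"
    using first second D unfolding D_def by (intro divide_pos_pos) (simp_all add: algebra_simps)
  finally show ?thesis .
qed

lemma has_real_derivative_log_f_ray:
  "((\<lambda>r. log_f (r *\<^sub>R u)) has_real_derivative log_f_deriv (r *\<^sub>R u) u) (at r)"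
proof -
  have "((\<lambda>r. r *\<^sub>R u) has_derivative (\<lambda>h. h *\<^sub>R u)) (at r)"
    by (auto intro!: derivative_eq_intros)
  from has_derivative_compose[OF this has_derivative_log_f]
  show ?thesis
    unfolding has_field_derivative_def by (simp add: linear_scale[OF linear_log_f_deriv] mult_commute_abs)
qed

lemma continuous_on_log_f_ray: "continuous_on S (\<lambda>r. log_f (r *\<^sub>R u))"
  by (intro continuous_at_imp_continuous_on ballI DERIV_isCont[OF has_real_derivative_log_f_ray])

lemma log_f_ray_strict_mono:
  fixes u :: "real^'n"
  assumes u: "u \<noteq> 0" and "0 \<le> a" "a < b"
  shows "log_f (a *\<^sub>R u) < log_f (b *\<^sub>R u)"
proof (rule DERIV_pos_imp_increasing_open[OF \<open>a < b\<close> _ continuous_on_log_f_ray])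
  fix r assume "a < r" "r < b"
  then show "\<exists>y. ((\<lambda>r. log_f (r *\<^sub>R u)) has_real_derivative y) (at r) \<and> 0 < y"
    using has_real_derivative_log_f_ray log_f_deriv_ray_pos[OF u] \<open>0 \<le> a\<close>
    by (intro exI[of _ "log_f_deriv (r *\<^sub>R u) u"]) auto
qed

lemma log_f_zero_less:
  fixes x :: "real^'n"
  assumes "x \<noteq> 0"
  shows "log_f (0::real^'n) < log_f x"
  using log_f_ray_strict_mono[OF assms, of 0 1] by simp

lemma log_f_zero_le: "log_f (0::real^'n) \<le> log_f (x::real^'n)"
  using log_f_zero_less[of x] by (cases "x = 0") auto

lemma log_f_eq_zero_iff: "log_f (x::real^'n) = log_f (0::real^'n) \<longleftrightarrow> x = 0"
  using log_f_zero_less[of x] by fastforce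

lemma abs_le_log_f: "\<bar>x $ k\<bar> \<le> log_f x"
proof -
  define L where "L = ln (1 + (\<Sum>i\<in>UNIV. exp (x $ i)))"
  have "0 \<le> L" unfolding L_def by (simp add: sum_nonneg)
  have below_L: "x $ j \<le> L" for j
  proof -
    have "exp (x $ j) \<le> 1 + (\<Sum>i\<in>UNIV. exp (x $ i))"
      using member_le_sum[of j UNIV "\<lambda>i. exp (x $ i)"] by simp
    then show ?thesis
      unfolding L_def using one_plus_sum_exp_pos by (subst ln_exp[symmetric]) (rule ln_mono; simp)
  qed
  have "log_f x = L + (\<Sum>j\<in>UNIV. L - x $ j)"
    unfolding log_f_def L_def by (simp add: sum_subtractf algebra_simps)
  moreover have "L - x $ k \<le> (\<Sum>j\<in>UNIV. L - x $ j)"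
    using below_L by (intro member_le_sum) auto
  ultimately show ?thesis using \<open>0 \<le> L\<close> below_L[of k] by linarith
qed

lemma ex1_ray_level:
  fixes u :: "real^'n"
  assumes u: "u \<noteq> 0" and s: "log_f (0::real^'n) < s"
  shows "\<exists>!r. 0 < r \<and> log_f (r *\<^sub>R u) = s"
proof -
  obtain k where k: "u $ k \<noteq> 0" using u by (auto simp: vec_eq_iff)
  define b where "b = (\<bar>s\<bar> + 1) / \<bar>u $ k\<bar>"
  have "0 < b" unfolding b_def using k by simp
  have "s \<le> \<bar>(b *\<^sub>R u) $ k\<bar>" unfolding b_def using k by (simp add: abs_mult)
  then have "s \<le> log_f (b *\<^sub>R u)" using abs_le_log_f order_trans by blast
  then obtain r where r: "0 \<le> r" "r \<le> b" "log_f (r *\<^sub>R u) = s"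
    using IVT'[OF _ _ _ continuous_on_log_f_ray[where u = u], where a = 0 and b = b and y = s] s \<open>0 < b\<close> by auto
  with s have "0 < r" by (cases "r = 0") auto
  show ?thesis
  proof (rule ex1I[of _ r])
    fix r' assume "0 < r' \<and> log_f (r' *\<^sub>R u) = s"
    then show "r' = r"
      using log_f_ray_strict_mono[OF u, of r' r] log_f_ray_strict_mono[OF u, of r r'] r \<open>0 < r\<close>
      by (cases r' r rule: linorder_cases) auto
  qed (use r \<open>0 < r\<close> in auto)
qed

section \<open>The radius of a level set along a ray\<close>

text \<open>
  Meaningful only for \<open>u \<noteq> 0\<close> and \<open>log_f 0 < s\<close>; otherwise the description has no
  (unique) witness and the value is arbitrary.
\<close>
definition level_radius :: "real \<Rightarrow> real^'n \<Rightarrow> real" where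
  "level_radius s u = (THE r. 0 < r \<and> log_f (r *\<^sub>R u) = s)"

lemma
  fixes u :: "real^'n"
  assumes "u \<noteq> 0" and "log_f (0::real^'n) < s"
  shows level_radius_pos: "0 < level_radius s u"
    and log_f_level_radius: "log_f (level_radius s u *\<^sub>R u) = s"
  using theI'[OF ex1_ray_level[OF assms]] unfolding level_radius_def by auto

lemma level_radius_eqI:
  fixes u :: "real^'n"
  assumes u: "u \<noteq> 0" and "0 < r"
  shows "level_radius (log_f (r *\<^sub>R u)) u = r"
proof -
  have "log_f (0::real^'n) < log_f (r *\<^sub>R u)"
    using log_f_ray_strict_mono[OF u, of 0 r] \<open>0 < r\<close> by simp
  then show ?thesis
    unfolding level_radius_def using \<open>0 < r\<close> by (intro the1_equality ex1_ray_level[OF u]) auto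
qed

lemma level_radius_log_f_normalized:
  fixes x :: "real^'n"
  assumes "x \<noteq> 0"
  shows "level_radius (log_f x) (x /\<^sub>R norm x) = norm x"
  using level_radius_eqI[of "x /\<^sub>R norm x" "norm x"] assms by simp

lemma has_derivative_log_f_scaleR:
  fixes p :: "(real^'n) \<times> real"
  shows "((\<lambda>q. log_f (snd q *\<^sub>R fst q)) has_derivative
      (\<lambda>h. log_f_deriv (snd p *\<^sub>R fst p) (snd p *\<^sub>R fst h + snd h *\<^sub>R fst p))) (at p)"
proof -
  have "((\<lambda>q. snd q *\<^sub>R fst q) has_derivative (\<lambda>h. snd p *\<^sub>R fst h + snd h *\<^sub>R fst p)) (at p)"
    by (auto intro!: derivative_eq_intros)
  from has_derivative_compose[OF this has_derivative_log_f] show ?thesis .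
qed

text \<open>
  Implicit differentiation: \<open>(u, s) \<mapsto> (u, level_radius s u)\<close> inverts
  \<open>(u, r) \<mapsto> (u, log_f (r u))\<close> on \<open>u \<noteq> 0, r > 0\<close>, whose derivative is invertible because
  \<open>log_f_deriv (R u) u > 0\<close>.
\<close>
lemma has_derivative_level_radius:
  fixes u :: "real^'n"
  assumes u: "u \<noteq> 0" and s: "log_f (0::real^'n) < s"
  defines "R \<equiv> level_radius s u"
  shows "(level_radius s has_derivative
           (\<lambda>a. - (R * log_f_deriv (R *\<^sub>R u) a) / log_f_deriv (R *\<^sub>R u) u)) (at u)"
proof -
  define G where "G p = (fst p, log_f (snd p *\<^sub>R fst p))" for p :: "(real^'n) \<times> real"
  define H where "H q = (fst q, level_radius (snd q) (fst q))" for q :: "(real^'n) \<times> real"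
  define S where "S = {p::(real^'n) \<times> real. fst p \<noteq> 0 \<and> 0 < snd p}"
  define D where "D = log_f_deriv (R *\<^sub>R u)"
  have R: "0 < R" "log_f (R *\<^sub>R u) = s"
    using level_radius_pos[OF u s] log_f_level_radius[OF u s] unfolding R_def by auto
  have "0 < D u" unfolding D_def by (rule log_f_deriv_ray_pos[OF u R(1)])
  have G': "(G has_derivative (\<lambda>h. (fst h, log_f_deriv (snd p *\<^sub>R fst p)
      (snd p *\<^sub>R fst h + snd h *\<^sub>R fst p)))) (at p)" for p
    unfolding G_def[abs_def]
    by (intro has_derivative_Pair has_derivative_fst[OF has_derivative_ident] has_derivative_log_f_scaleR)
  have "open S"
    unfolding S_def by (intro open_Collect_conj open_Collect_neq open_Collect_less continuous_intros)
  moreover have "(u, R) \<in> S" unfolding S_def using u R by simp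
  moreover have "continuous_on S G"
    by (intro continuous_at_imp_continuous_on ballI has_derivative_continuous[OF G'])
  moreover have "H (G p) = p" if "p \<in> S" for p
    using that level_radius_eqI[of "fst p" "snd p"] unfolding S_def G_def H_def by simp
  moreover note G'[of "(u, R)", unfolded fst_conv snd_conv, folded D_def]
  moreover have "(\<lambda>h. (fst h, D (R *\<^sub>R fst h + snd h *\<^sub>R u))) \<circ>
      (\<lambda>k. (fst k, (snd k - R * D (fst k)) / D u)) = id"
    using \<open>0 < D u\<close> unfolding D_def
    by (simp add: fun_eq_iff linear_add[OF linear_log_f_deriv] linear_scale[OF linear_log_f_deriv])
  ultimately have "(H has_derivative (\<lambda>k. (fst k, (snd k - R * D (fst k)) / D u))) (at (G (u, R)))"
    by (rule has_derivative_inverse_strong)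
  then have H': "(H has_derivative (\<lambda>k. (fst k, (snd k - R * D (fst k)) / D u))) (at (u, s))"
    unfolding G_def using R by simp
  have "((\<lambda>v. (v, s)) has_derivative (\<lambda>a. (a, 0))) (at u)"
    by (auto intro!: derivative_eq_intros)
  from has_derivative_snd[OF has_derivative_compose[OF this H']]
  have "((\<lambda>v. snd (H (v, s))) has_derivative (\<lambda>a. (0 - R * D a) / D u)) (at u)"
    by simp
  then show ?thesis unfolding H_def D_def by simp
qed

lemma log_f_deriv_elementary:
  fixes X Y :: "'a::real_normed_vector \<Rightarrow> real^'n"
  assumes "\<And>i. (\<lambda>x. X x $ i) \<in> elementary_funs U A" and "\<And>i. (\<lambda>x. Y x $ i) \<in> elementary_funs U A"
  shows "(\<lambda>x. log_f_deriv (X x) (Y x)) \<in> elementary_funs U A"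
proof -
  have "\<forall>x\<in>U. 1 + (\<Sum>i\<in>UNIV. exp (X x $ i)) \<noteq> 0"
    using one_plus_sum_exp_pos[THEN less_imp_neq, THEN not_sym] by blast
  then show ?thesis
    unfolding log_f_deriv_def using assms
    by (intro elementary_funs_diff elementary_funs_divide elementary_funs.mult elementary_funs.add
        elementary_funs.const elementary_funs.exp elementary_funs_sum) auto
qed

lemma derivatives_in_level_radius:
  assumes s: "log_f (0::real^'n) < s"
  shows "derivatives_in {u::real^'n. u \<noteq> 0} {level_radius s}
           (elementary_funs {u. u \<noteq> 0} {level_radius s})"
proof -
  let ?E = "elementary_funs {u::real^'n. u \<noteq> 0} {level_radius s}"
  let ?R = "level_radius s"
  have R: "?R \<in> ?E" by (rule elementary_funs.atom) simp
  have ray: "(\<lambda>u. (?R u *\<^sub>R u) $ i) \<in> ?E" for i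
    by (simp, intro elementary_funs.mult R elementary_funs_vec_nth)
  have "log_f_deriv (?R u *\<^sub>R u) u \<noteq> 0" if "u \<noteq> 0" for u :: "real^'n"
    using log_f_deriv_ray_pos[OF that level_radius_pos[OF that s]] by simp
  then have "(\<lambda>u. - (?R u * log_f_deriv (?R u *\<^sub>R u) a) / log_f_deriv (?R u *\<^sub>R u) u) \<in> ?E" for a
    by (intro elementary_funs_divide elementary_funs_uminus elementary_funs.mult R
        log_f_deriv_elementary ray elementary_funs.const elementary_funs_vec_nth) auto
  then have "\<exists>Df. (\<forall>u\<in>{u. u \<noteq> 0}. (?R has_derivative (\<lambda>a. Df a u)) (at u)) \<and> (\<forall>a. Df a \<in> ?E)"
    using has_derivative_level_radius[OF _ s]
    by (intro derivatives_inI[where Df = "\<lambda>a u. - (?R u * log_f_deriv (?R u *\<^sub>R u) a)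
        / log_f_deriv (?R u *\<^sub>R u) u"]) simp_all
  then show ?thesis unfolding derivatives_in_def by simp
qed

section \<open>The level sets\<close>

definition ln_vec :: "real^'n \<Rightarrow> real^'n" where
  "ln_vec z = (\<chi> i. ln (z $ i))"

definition exp_vec :: "real^'n \<Rightarrow> real^'n" where
  "exp_vec x = (\<chi> i. exp (x $ i))"

lemma ln_vec_exp_vec [simp]: "ln_vec (exp_vec x) = x"
  by (simp add: ln_vec_def exp_vec_def vec_eq_iff)

lemma ln_vec_one [simp]: "ln_vec 1 = 0"
  by (simp add: ln_vec_def vec_eq_iff)

lemma exp_vec_nth_pos [simp]: "0 < exp_vec x $ i"
  by (simp add: exp_vec_def)

lemma exp_vec_ln_vec: "\<forall>i. 0 < z $ i \<Longrightarrow> exp_vec (ln_vec z) = z"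
  by (simp add: ln_vec_def exp_vec_def vec_eq_iff)

lemma ln_vec_eq_zero_iff: "\<forall>i. 0 < z $ i \<Longrightarrow> ln_vec z = 0 \<longleftrightarrow> z = 1"
  by (auto simp: ln_vec_def vec_eq_iff)

lemma power_sum_div_prod_eq_exp_log_f:
  fixes z :: "real^'n"
  assumes z: "\<forall>i. 0 < z $ i"
  shows "(1 + (\<Sum>i\<in>UNIV. z $ i)) ^ (CARD('n) + 1) / (\<Prod>i\<in>UNIV. z $ i) = exp (log_f (ln_vec z))"
proof -
  define S where "S = 1 + (\<Sum>i\<in>UNIV. z $ i)"
  have "0 < S" unfolding S_def using z by (simp add: add_pos_nonneg sum_nonneg less_imp_le)
  then have "ln (S ^ (CARD('n) + 1)) = (real CARD('n) + 1) * ln S"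
    using ln_realpow[of S "CARD('n) + 1"] by simp
  then have "S ^ (CARD('n) + 1) = exp ((real CARD('n) + 1) * ln S)"
    using \<open>0 < S\<close> by (metis exp_ln zero_less_power)
  moreover have "(\<Prod>i\<in>UNIV. z $ i) = exp (\<Sum>i\<in>UNIV. ln (z $ i))"
    using z by (simp add: exp_sum)
  ultimately show ?thesis
    using z unfolding S_def by (simp add: log_f_def ln_vec_def exp_diff)
qed

lemma smooth_on_open_normalized_ln_vec:
  "smooth_on_open {z::real^'n. (\<forall>i. 0 < z $ i) \<and> z \<noteq> 1} (\<lambda>z. ln_vec z /\<^sub>R norm (ln_vec z))"
proof (rule smooth_on_open_elementary_components[where A = "{}"])
  let ?O = "{z::real^'n. (\<forall>i. 0 < z $ i) \<and> z \<noteq> 1}"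
  have "?O = (\<Inter>i. {z. 0 < z $ i}) \<inter> - {1}" by auto
  moreover have "open {z::real^'n. 0 < z $ i}" for i
    by (intro open_Collect_less continuous_intros)
  ultimately show "open ?O" by (auto intro!: open_Int open_INT open_Compl)
  show "derivatives_in ?O {} (elementary_funs ?O {})" by (simp add: derivatives_in_def)
  fix i :: 'n
  have pos: "0 < (\<Sum>j\<in>UNIV. ln (z $ j) * ln (z $ j))" if z: "\<forall>i. 0 < z $ i" "z \<noteq> 1" for z :: "real^'n"
  proof -
    obtain k where "z $ k \<noteq> 1" using z(2) by (metis vec_eq_iff one_index)
    then have "ln (z $ k) \<noteq> 0" using z(1)[rule_format, of k] by simp
    then have "0 < ln (z $ k) * ln (z $ k)" by (auto simp: zero_less_mult_iff linorder_neq_iff)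
    then show ?thesis by (intro sum_pos2[of UNIV k]) auto
  qed
  have "(\<lambda>z. ln (z $ i) * inverse (sqrt (\<Sum>j\<in>UNIV. ln (z $ j) * ln (z $ j)))) \<in> elementary_funs ?O {}"
    by (intro elementary_funs.mult elementary_funs.ln elementary_funs.inverse elementary_funs.sqrt
        elementary_funs_sum elementary_funs_vec_nth) (auto simp: pos pos[THEN less_imp_neq, THEN not_sym])
  then show "(\<lambda>z. (ln_vec z /\<^sub>R norm (ln_vec z)) $ i) \<in> elementary_funs ?O {}"
    by (simp add: ln_vec_def norm_vec_def L2_set_def power2_eq_square divide_inverse mult.commute)
qed

lemma smooth_on_open_exp_vec_level_radius:
  assumes "log_f (0::real^'n) < s"
  shows "smooth_on_open {u::real^'n. u \<noteq> 0} (\<lambda>u. exp_vec (level_radius s u *\<^sub>R u))"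
proof (rule smooth_on_open_elementary_components[OF _ derivatives_in_level_radius[OF assms]])
  show "open {u::real^'n. u \<noteq> 0}" by (simp add: open_Collect_neq)
  fix i :: 'n
  show "(\<lambda>u. exp_vec (level_radius s u *\<^sub>R u) $ i) \<in> elementary_funs {u. u \<noteq> 0} {level_radius s}"
    unfolding exp_vec_def
    by (simp, intro elementary_funs.exp elementary_funs.mult elementary_funs.atom elementary_funs_vec_nth) simp
qed

lemma diffeomorphic_log_f_level_set_sphere:
  assumes s: "log_f (0::real^'n) < s"
  shows "diffeomorphic {z::real^'n. (\<forall>i. 0 < z $ i) \<and> log_f (ln_vec z) = s} (sphere (0::real^'n) 1)"
proof -
  define P where "P = {z::real^'n. (\<forall>i. 0 < z $ i) \<and> log_f (ln_vec z) = s}"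
  define h where "h z = ln_vec z /\<^sub>R norm (ln_vec z)" for z :: "real^'n"
  define g where "g u = exp_vec (level_radius s u *\<^sub>R u)" for u :: "real^'n"
  have ln_vec_nonzero: "ln_vec z \<noteq> 0" if "z \<in> P" for z
    using that s unfolding P_def by auto
  have h_sphere: "h z \<in> sphere 0 1" if "z \<in> P" for z
    unfolding h_def using ln_vec_nonzero[OF that] by simp
  have g_h: "g (h z) = z" if z: "z \<in> P" for z
    using level_radius_log_f_normalized[OF ln_vec_nonzero[OF z]] ln_vec_nonzero[OF z] z
    unfolding g_def h_def P_def by (simp add: exp_vec_ln_vec)
  have g_P: "g u \<in> P" and h_g: "h (g u) = u" if "u \<in> sphere 0 1" for u
  proof -
    have "u \<noteq> 0" "norm u = 1" using that by auto
    note R = level_radius_pos[OF \<open>u \<noteq> 0\<close> s] log_f_level_radius[OF \<open>u \<noteq> 0\<close> s]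
    show "g u \<in> P" unfolding g_def P_def using R by simp
    show "h (g u) = u" unfolding g_def h_def using R \<open>norm u = 1\<close> by simp
  qed
  have "P \<subseteq> {z. (\<forall>i. 0 < z $ i) \<and> z \<noteq> 1}"
  proof
    fix z assume z: "z \<in> P"
    then have "z \<noteq> 1" using ln_vec_nonzero[OF z] by auto
    with z show "z \<in> {z. (\<forall>i. 0 < z $ i) \<and> z \<noteq> 1}" unfolding P_def by simp
  qed
  then have "smooth_map_on P h"
    unfolding h_def[abs_def] by (rule smooth_map_on_subset[OF smooth_on_open_normalized_ln_vec])
  moreover have "smooth_map_on (sphere 0 1) g"
    unfolding g_def[abs_def]
    by (intro smooth_map_on_subset[OF smooth_on_open_exp_vec_level_radius[OF s]]) auto
  ultimately show ?thesis
    unfolding diffeomorphic_def P_def[symmetric]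
    by (intro exI[of _ h] exI[of _ g] conjI ballI h_sphere g_P g_h h_g)
qed

theorem mainTheorem11:
  fixes t :: real
  defines "f \<equiv> (\<lambda>z::real^'n. (1 + (\<Sum>i\<in>UNIV. z $ i)) ^ (CARD('n) + 1) / (\<Prod>i\<in>UNIV. z $ i))"
  defines "P \<equiv> {z::real^'n. (\<forall>i. 0 < z $ i) \<and> f z = t}"
  shows "(t < real (CARD('n) + 1) ^ (CARD('n) + 1) \<longrightarrow> P = {})
       \<and> (t = real (CARD('n) + 1) ^ (CARD('n) + 1) \<longrightarrow> (\<exists>p. P = {p}))
       \<and> (t > real (CARD('n) + 1) ^ (CARD('n) + 1) \<longrightarrow> diffeomorphic P (sphere (0::real^'n) 1))"
proof -
  have P: "P = {z. (\<forall>i. 0 < z $ i) \<and> exp (log_f (ln_vec z)) = t}"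
    unfolding P_def f_def using power_sum_div_prod_eq_exp_log_f by auto
  note min_value = exp_log_f_zero[where 'n = 'n, symmetric]
  show ?thesis
  proof (intro conjI impI)
    assume "t < real (CARD('n) + 1) ^ (CARD('n) + 1)"
    then have "exp (log_f (ln_vec z)) \<noteq> t" for z :: "real^'n"
      using log_f_zero_le[of "ln_vec z"] exp_le_cancel_iff[of "log_f (0::real^'n)" "log_f (ln_vec z)"]
      unfolding min_value by linarith
    then show "P = {}" unfolding P by auto
  next
    assume "t = real (CARD('n) + 1) ^ (CARD('n) + 1)"
    then have "P = {1}"
      unfolding P min_value by (auto simp: log_f_eq_zero_iff ln_vec_eq_zero_iff)
    then show "\<exists>p. P = {p}" ..
  next
    assume t: "real (CARD('n) + 1) ^ (CARD('n) + 1) < t"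
    then have "0 < t" and "log_f (0::real^'n) < ln t"
      unfolding min_value using exp_gt_zero less_trans by (blast, metis exp_less_cancel_iff exp_ln)
    then have "P = {z. (\<forall>i. 0 < z $ i) \<and> log_f (ln_vec z) = ln t}"
      unfolding P by auto
    then show "diffeomorphic P (sphere (0::real^'n) 1)"
      using diffeomorphic_log_f_level_set_sphere[OF \<open>log_f 0 < ln t\<close>] by simp
  qed
qed

end
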